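(* Let $c=\sqrt[3]{5589+891\sqrt{33}}/8=2.7551046130\ldots$ There is an absolute constant $C>0$ such that for every $n\ge1$ and every $A\subseteq\mathbb{F}_3^n$ for which the equation $a+b+c'=0$ with $a,b,c'\in A$ has no solutions except $a=b=c'$, one has $|A|\le C\,c^n$.
   Context: $\mathbb{F}_3$ is the field of integers modulo $3$. *)

theory Defs
  imports Complex_Main "HOL-Library.Numeral_Type"
begin

text \<open>The field F_3 is the numeral type 3 (integers mod 3).
  F_3^n is represented as functions nat => 3 vanishing outside {0..<n}.\<close>

definition F3vec :: "nat \<Rightarrow> (nat \<Rightarrow> 3) set" where
  "F3vec n = {x. \<forall>i\<ge>n. x i = 0}"

definition cap_c :: real where
  "cap_c = root 3 (5589 + 891 * sqrt 33) / 8"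

end

theory Submission
  imports Defs "HOL-Library.FuncSet"
begin

text \<open>The slice-rank method of Croot--Lev--Pach, Ellenberg--Gijswijt and Tao. On a cap set
  A \<subseteq> F_3^n the indicator of x = y = z equals \<Prod>i. 1 - (x_i + y_i + z_i)^2, a polynomial
  of degree 2n; each of its monomials has degree at most 2n/3 in one of x, y, z, so the
  indicator is a sum of at most 3M functions of the form f(x) g(y, z) (and permutations),
  where M counts the exponent vectors in {0,1,2}^n of degree at most 2n/3. A diagonal
  tensor with nonzero diagonal is not a sum of fewer than |A| such slices, so |A| \<le> 3M.
  Finally, weighting exponent vectors by x^degree gives M \<le> ((1 + x + x^2) / x^(2/3))^n
  for every 0 < x \<le> 1, which at the optimal x is c^n.\<close>

text \<open>The scalars below only need to form a field; this is phrased as a hypothesis on units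
  because the numeral type 3 is not an instance of class field.\<close>

lemma homogeneous_system_solution_large_support:
  fixes f :: "'i \<Rightarrow> 's \<Rightarrow> 'a::comm_ring_1"
  assumes units: "\<And>a::'a. a \<noteq> 0 \<Longrightarrow> a dvd 1"
    and "finite I" and "finite S"
  shows "\<exists>w. (\<forall>i\<in>I. (\<Sum>s\<in>S. w s * f i s) = 0) \<and> card S \<le> card I + card {s\<in>S. w s \<noteq> 0}"
  using assms(2,3)
proof (induction I arbitrary: S f rule: finite_induct)
  case empty
  show ?case by (rule exI[of _ "\<lambda>_. 1"]) simp
next
  case (insert i0 I)
  show ?case
  proof (cases "\<forall>s\<in>S. f i0 s = 0")
    case True
    obtain w where "\<forall>i\<in>I. (\<Sum>s\<in>S. w s * f i s) = 0" "card S \<le> card I + card {s\<in>S. w s \<noteq> 0}"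
      using insert.IH[OF insert.prems] by blast
    with True insert.hyps show ?thesis by (intro exI[of _ w]) auto
  next
    case False
    then obtain s0 where s0: "s0 \<in> S" "f i0 s0 \<noteq> 0" by blast
    obtain u where u: "f i0 s0 * u = 1" using units[OF s0(2)] by (metis dvdE)
    \<comment> \<open>Eliminate the unknown at s0 from the remaining equations using equation i0.\<close>
    define g where "g i s = f i s - f i s0 * u * f i0 s" for i s
    define S' where "S' = S - {s0}"
    have "finite S'" using insert.prems by (simp add: S'_def)
    then obtain w' where w': "\<forall>i\<in>I. (\<Sum>s\<in>S'. w' s * g i s) = 0"
        "card S' \<le> card I + card {s\<in>S'. w' s \<noteq> 0}"
      using insert.IH[of S' g] by blast
    define w where "w s = (if s = s0 then - u * (\<Sum>s\<in>S'. w' s * f i0 s) else w' s)" for s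
    have split: "(\<Sum>s\<in>S. w s * h s) = w s0 * h s0 + (\<Sum>s\<in>S'. w' s * h s)" for h
    proof -
      have "(\<Sum>s\<in>S. w s * h s) = w s0 * h s0 + (\<Sum>s\<in>S'. w s * h s)"
        unfolding S'_def by (rule sum.remove[OF insert.prems s0(1)])
      also have "(\<Sum>s\<in>S'. w s * h s) = (\<Sum>s\<in>S'. w' s * h s)"
        by (rule sum.cong) (auto simp: w_def S'_def)
      finally show ?thesis .
    qed
    have "(\<Sum>s\<in>S. w s * f i s) = 0" if i: "i \<in> insert i0 I" for i
    proof (cases "i = i0")
      case True
      have "w s0 * f i0 s0 = - (f i0 s0 * u) * (\<Sum>s\<in>S'. w' s * f i0 s)"
        by (simp add: w_def algebra_simps)
      then show ?thesis using True u split[of "f i0"] by simp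
    next
      case False
      then have "0 = (\<Sum>s\<in>S'. w' s * g i s)" using w' i by auto
      also have "\<dots> = (\<Sum>s\<in>S'. w' s * f i s) - f i s0 * u * (\<Sum>s\<in>S'. w' s * f i0 s)"
        by (simp add: g_def algebra_simps sum_subtractf sum_distrib_left)
      also have "\<dots> = (\<Sum>s\<in>S. w s * f i s)"
        using split[of "f i"] by (simp add: w_def algebra_simps)
      finally show ?thesis by simp
    qed
    moreover have "card S \<le> card (insert i0 I) + card {s\<in>S. w s \<noteq> 0}"
    proof -
      have "card S = Suc (card S')"
        using s0 insert.prems card_Suc_Diff1[of S s0] by (simp add: S'_def)
      moreover have "card {s\<in>S'. w' s \<noteq> 0} \<le> card {s\<in>S. w s \<noteq> 0}"
        by (rule card_mono) (use insert.prems in \<open>auto simp: w_def S'_def\<close>)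
      ultimately show ?thesis using w'(2) insert.hyps by simp
    qed
    ultimately show ?thesis by blast
  qed
qed

lemma card_support_le_of_diagonal_decomposition:
  fixes v :: "'s \<Rightarrow> 'a::comm_ring_1" and a b :: "'i \<Rightarrow> 's \<Rightarrow> 'a"
  assumes units: "\<And>a::'a. a \<noteq> 0 \<Longrightarrow> a dvd 1"
    and "finite S" and "finite I"
    and diag: "\<And>x y. x \<in> S \<Longrightarrow> y \<in> S \<Longrightarrow> (if x = y then v x else 0) = (\<Sum>i\<in>I. a i x * b i y)"
  shows "card {x\<in>S. v x \<noteq> 0} \<le> card I"
proof -
  define S0 where "S0 = {x\<in>S. v x \<noteq> 0}"
  have fS0: "finite S0" using assms(2) by (simp add: S0_def)
  obtain w where w: "\<forall>i\<in>I. (\<Sum>y\<in>S0. w y * b i y) = 0" "card S0 \<le> card I + card {y\<in>S0. w y \<noteq> 0}"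
    using homogeneous_system_solution_large_support[OF units assms(3) fS0, of b] by blast
  have "w x = 0" if x: "x \<in> S0" for x
  proof -
    have "w x * v x = (\<Sum>y\<in>S0. w y * (if x = y then v x else 0))"
      using x fS0 by (simp add: if_distrib cong: if_cong)
    also have "\<dots> = (\<Sum>y\<in>S0. w y * (\<Sum>i\<in>I. a i x * b i y))"
      by (rule sum.cong) (use x diag in \<open>auto simp: S0_def\<close>)
    also have "\<dots> = (\<Sum>i\<in>I. a i x * (\<Sum>y\<in>S0. w y * b i y))"
      by (simp add: sum_distrib_left sum_distrib_right algebra_simps sum.swap[of _ S0])
    also have "\<dots> = 0" using w(1) by simp
    finally have "w x * v x = 0" .
    moreover have "v x dvd 1" using units x by (simp add: S0_def)
    then obtain k where "1 = v x * k" by (rule dvdE)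
    ultimately show "w x = 0" by (metis mult.assoc mult_1_right mult_zero_left)
  qed
  then have "{y\<in>S0. w y \<noteq> 0} = {}" by auto
  with w(2) have "card S0 \<le> card I" by simp
  then show ?thesis by (simp add: S0_def)
qed

lemma card_le_of_slice_decomposition:
  fixes fx :: "'i1 \<Rightarrow> 's \<Rightarrow> 'a::comm_ring_1" and fy :: "'i2 \<Rightarrow> 's \<Rightarrow> 'a" and fz :: "'i3 \<Rightarrow> 's \<Rightarrow> 'a"
  assumes units: "\<And>a::'a. a \<noteq> 0 \<Longrightarrow> a dvd 1"
    and "finite A" and "finite I1" "finite I2" "finite I3"
    and delta: "\<And>x y z. x \<in> A \<Longrightarrow> y \<in> A \<Longrightarrow> z \<in> A \<Longrightarrow>
      (if x = y \<and> y = z then 1 else 0) =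
        (\<Sum>i\<in>I1. fx i x * gx i y z) + (\<Sum>i\<in>I2. fy i y * gy i x z) + (\<Sum>i\<in>I3. fz i z * gz i x y)"
  shows "card A \<le> card I1 + card I2 + card I3"
proof -
  \<comment> \<open>Contracting the z-slot against a vector w killing the I3-slices leaves a diagonal
      matrix in x, y of rank at most card I1 + card I2.\<close>
  obtain w where w: "\<forall>i\<in>I3. (\<Sum>z\<in>A. w z * fz i z) = 0" "card A \<le> card I3 + card {z\<in>A. w z \<noteq> 0}"
    using homogeneous_system_solution_large_support[OF units assms(5,2), of fz] by blast
  define a where "a j x = (case j of Inl i \<Rightarrow> fx i x | Inr i \<Rightarrow> (\<Sum>z\<in>A. w z * gy i x z))" for j x
  define b where "b j y = (case j of Inl i \<Rightarrow> (\<Sum>z\<in>A. w z * gx i y z) | Inr i \<Rightarrow> fy i y)" for j y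
  have "(if x = y then w x else 0) = (\<Sum>j\<in>I1 <+> I2. a j x * b j y)" if x: "x \<in> A" and y: "y \<in> A" for x y
  proof -
    have "(if x = y then w x else 0) = (\<Sum>z\<in>A. w z * (if x = y \<and> y = z then 1 else 0))"
      using x assms(2) by (auto simp: if_distrib cong: if_cong)
    also have "\<dots> = (\<Sum>z\<in>A. w z * ((\<Sum>i\<in>I1. fx i x * gx i y z) + (\<Sum>i\<in>I2. fy i y * gy i x z)
        + (\<Sum>i\<in>I3. fz i z * gz i x y)))"
      by (rule sum.cong) (use x y delta in auto)
    also have "\<dots> = (\<Sum>i\<in>I1. fx i x * (\<Sum>z\<in>A. w z * gx i y z)) + (\<Sum>i\<in>I2. fy i y * (\<Sum>z\<in>A. w z * gy i x z))
        + (\<Sum>i\<in>I3. gz i x y * (\<Sum>z\<in>A. w z * fz i z))"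
      by (simp add: distrib_left sum.distrib sum_distrib_left sum.swap[of _ A] algebra_simps)
    also have "\<dots> = (\<Sum>j\<in>I1 <+> I2. a j x * b j y)"
      using w(1) assms(3,4) by (simp add: sum.Plus a_def b_def mult.commute)
    finally show ?thesis .
  qed
  then have "card {x\<in>A. w x \<noteq> 0} \<le> card (I1 <+> I2)"
    by (intro card_support_le_of_diagonal_decomposition[OF units assms(2)]) (use assms(3,4) in auto)
  then show ?thesis using w(2) assms(3,4) by (simp add: card_Plus)
qed

lemma card_le_of_delta_expansion:
  fixes c :: "'e \<Rightarrow> 'a::comm_ring_1" and f :: "'m \<Rightarrow> 's \<Rightarrow> 'a"
  assumes units: "\<And>a::'a. a \<noteq> 0 \<Longrightarrow> a dvd 1"
    and "finite A" "finite E" "finite M"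
    and cover: "\<And>e. e \<in> E \<Longrightarrow> p e \<in> M \<or> q e \<in> M \<or> r e \<in> M"
    and delta: "\<And>x y z. x \<in> A \<Longrightarrow> y \<in> A \<Longrightarrow> z \<in> A \<Longrightarrow>
      (if x = y \<and> y = z then 1 else 0) = (\<Sum>e\<in>E. c e * f (p e) x * f (q e) y * f (r e) z)"
  shows "card A \<le> 3 * card M"
proof -
  define E1 where "E1 = {e\<in>E. p e \<in> M}"
  define E2 where "E2 = {e\<in>E. p e \<notin> M \<and> q e \<in> M}"
  define E3 where "E3 = {e\<in>E. p e \<notin> M \<and> q e \<notin> M}"
  have fin: "finite E1" "finite E2" "finite E3" using assms(3) by (auto simp: E1_def E2_def E3_def)
  have E3: "r ` E3 \<subseteq> M" using cover by (auto simp: E3_def)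
  define t where "t x y z e = c e * f (p e) x * f (q e) y * f (r e) z" for x y z e
  define g1 where "g1 \<alpha> y z = (\<Sum>e | e \<in> E1 \<and> p e = \<alpha>. c e * f (q e) y * f (r e) z)" for \<alpha> y z
  define g2 where "g2 \<alpha> x z = (\<Sum>e | e \<in> E2 \<and> q e = \<alpha>. c e * f (p e) x * f (r e) z)" for \<alpha> x z
  define g3 where "g3 \<alpha> x y = (\<Sum>e | e \<in> E3 \<and> r e = \<alpha>. c e * f (p e) x * f (q e) y)" for \<alpha> x y
  have group1: "(\<Sum>e\<in>E1. t x y z e) = (\<Sum>\<alpha>\<in>M. f \<alpha> x * g1 \<alpha> y z)" for x y z
  proof -
    have "(\<Sum>e\<in>E1. t x y z e) = (\<Sum>\<alpha>\<in>M. \<Sum>e | e \<in> E1 \<and> p e = \<alpha>. t x y z e)"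
      by (rule sum.group[symmetric]) (use fin assms(4) in \<open>auto simp: E1_def\<close>)
    then show ?thesis by (simp add: g1_def t_def sum_distrib_left algebra_simps)
  qed
  have group2: "(\<Sum>e\<in>E2. t x y z e) = (\<Sum>\<alpha>\<in>M. f \<alpha> y * g2 \<alpha> x z)" for x y z
  proof -
    have "(\<Sum>e\<in>E2. t x y z e) = (\<Sum>\<alpha>\<in>M. \<Sum>e | e \<in> E2 \<and> q e = \<alpha>. t x y z e)"
      by (rule sum.group[symmetric]) (use fin assms(4) in \<open>auto simp: E2_def\<close>)
    then show ?thesis by (simp add: g2_def t_def sum_distrib_left algebra_simps)
  qed
  have group3: "(\<Sum>e\<in>E3. t x y z e) = (\<Sum>\<alpha>\<in>M. f \<alpha> z * g3 \<alpha> x y)" for x y z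
  proof -
    have "(\<Sum>e\<in>E3. t x y z e) = (\<Sum>\<alpha>\<in>M. \<Sum>e | e \<in> E3 \<and> r e = \<alpha>. t x y z e)"
      by (rule sum.group[symmetric]) (use fin assms(4) E3 in auto)
    then show ?thesis by (simp add: g3_def t_def sum_distrib_left algebra_simps)
  qed
  have "card A \<le> card M + card M + card M"
  proof (rule card_le_of_slice_decomposition[OF units assms(2,4,4,4), where gx = g1 and gy = g2 and gz = g3])
    have disjoint: "E1 \<inter> (E2 \<union> E3) = {}" "E2 \<inter> E3 = {}" by (auto simp: E1_def E2_def E3_def)
    fix x y z assume "x \<in> A" "y \<in> A" "z \<in> A"
    then have "(if x = y \<and> y = z then 1 else 0) = (\<Sum>e\<in>E. t x y z e)"
      by (simp add: delta t_def)
    also have "E = E1 \<union> (E2 \<union> E3)" by (auto simp: E1_def E2_def E3_def)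
    finally show "(if x = y \<and> y = z then 1 else 0) =
      (\<Sum>\<alpha>\<in>M. f \<alpha> x * g1 \<alpha> y z) + (\<Sum>\<alpha>\<in>M. f \<alpha> y * g2 \<alpha> x z) + (\<Sum>\<alpha>\<in>M. f \<alpha> z * g3 \<alpha> x y)"
      using fin disjoint by (simp add: sum.union_disjoint group1 group2 group3 add.assoc)
  qed
  then show ?thesis by simp
qed

definition eval_monomial :: "nat \<Rightarrow> (nat \<Rightarrow> nat) \<Rightarrow> (nat \<Rightarrow> 'a::comm_semiring_1) \<Rightarrow> 'a" where
  "eval_monomial n \<alpha> x = (\<Prod>i<n. x i ^ \<alpha> i)"

definition total_degree :: "nat \<Rightarrow> (nat \<Rightarrow> nat) \<Rightarrow> nat" where
  "total_degree n \<alpha> = (\<Sum>i<n. \<alpha> i)"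

definition low_degree_exponents :: "nat \<Rightarrow> (nat \<Rightarrow> nat) set" where
  "low_degree_exponents n = {\<alpha> \<in> {..<n} \<rightarrow>\<^sub>E {0, 1, 2}. 3 * total_degree n \<alpha> \<le> 2 * n}"

text \<open>Exponent triples (i, j, k) of the monomials a^i b^j c^k of 1 - (a + b + c)^2.\<close>

definition square_terms :: "(nat \<times> nat \<times> nat) set" where
  "square_terms = {(0,0,0), (2,0,0), (0,2,0), (0,0,2), (1,1,0), (0,1,1), (1,0,1)}"

definition square_coeff :: "nat \<times> nat \<times> nat \<Rightarrow> 'a::comm_ring_1" where
  "square_coeff t = (if t = (0,0,0) then 1 else if t \<in> {(2,0,0), (0,2,0), (0,0,2)} then -1 else -2)"

definition exponent_slice :: "nat \<Rightarrow> (nat \<times> nat \<times> nat \<Rightarrow> nat) \<Rightarrow> (nat \<Rightarrow> nat \<times> nat \<times> nat) \<Rightarrow> nat \<Rightarrow> nat" where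
  "exponent_slice n \<pi> e = restrict (\<pi> \<circ> e) {..<n}"

lemma one_minus_square_expansion:
  fixes a b c :: "'a::comm_ring_1"
  shows "1 - (a + b + c)^2 = (\<Sum>t\<in>square_terms. square_coeff t * a ^ fst t * b ^ fst (snd t) * c ^ snd (snd t))"
  by (simp add: square_terms_def square_coeff_def power2_eq_square algebra_simps)

lemma prod_one_minus_square_expansion:
  fixes x y z :: "nat \<Rightarrow> 'a::comm_ring_1"
  shows "(\<Prod>i<n. 1 - (x i + y i + z i)^2) =
    (\<Sum>e \<in> {..<n} \<rightarrow>\<^sub>E square_terms. (\<Prod>i<n. square_coeff (e i))
      * eval_monomial n (exponent_slice n fst e) x
      * eval_monomial n (exponent_slice n (fst \<circ> snd) e) y
      * eval_monomial n (exponent_slice n (snd \<circ> snd) e) z)"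
proof -
  have "(\<Prod>i<n. 1 - (x i + y i + z i)^2) = (\<Prod>i<n. \<Sum>t\<in>square_terms.
      square_coeff t * x i ^ fst t * y i ^ fst (snd t) * z i ^ snd (snd t))"
    by (simp add: one_minus_square_expansion)
  also have "\<dots> = (\<Sum>e \<in> {..<n} \<rightarrow>\<^sub>E square_terms. \<Prod>i<n.
      square_coeff (e i) * x i ^ fst (e i) * y i ^ fst (snd (e i)) * z i ^ snd (snd (e i)))"
    by (rule prod_sum_PiE) (auto simp: square_terms_def)
  also have "\<dots> = (\<Sum>e \<in> {..<n} \<rightarrow>\<^sub>E square_terms. (\<Prod>i<n. square_coeff (e i))
      * eval_monomial n (exponent_slice n fst e) x
      * eval_monomial n (exponent_slice n (fst \<circ> snd) e) y
      * eval_monomial n (exponent_slice n (snd \<circ> snd) e) z)"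
    by (simp add: prod.distrib eval_monomial_def exponent_slice_def)
  finally show ?thesis .
qed

lemma exponent_slice_in_PiE:
  assumes "e \<in> {..<n} \<rightarrow>\<^sub>E square_terms" and "\<pi> \<in> {fst, fst \<circ> snd, snd \<circ> snd}"
  shows "exponent_slice n \<pi> e \<in> {..<n} \<rightarrow>\<^sub>E {0, 1, 2}"
proof -
  have "\<pi> t \<in> {0, 1, 2}" if "t \<in> square_terms" for t
    using assms(2) that by (auto simp: square_terms_def)
  with assms(1) show ?thesis by (auto simp: exponent_slice_def PiE_iff)
qed

lemma exponent_slices_low_degree:
  assumes e: "e \<in> {..<n} \<rightarrow>\<^sub>E square_terms"
  shows "exponent_slice n fst e \<in> low_degree_exponents n
    \<or> exponent_slice n (fst \<circ> snd) e \<in> low_degree_exponents n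
    \<or> exponent_slice n (snd \<circ> snd) e \<in> low_degree_exponents n"
proof -
  \<comment> \<open>Every term of 1 - (a + b + c)^2 has degree at most 2, so the three slices have
      total degree at most 2n, and one of them at most 2n/3.\<close>
  define d where "d \<pi> = total_degree n (exponent_slice n \<pi> e)" for \<pi>
  have "d fst + d (fst \<circ> snd) + d (snd \<circ> snd) = (\<Sum>i<n. fst (e i) + fst (snd (e i)) + snd (snd (e i)))"
    by (simp add: d_def total_degree_def exponent_slice_def sum.distrib)
  also have "\<dots> \<le> (\<Sum>i<n. 2)"
  proof (rule sum_mono)
    fix i assume "i \<in> {..<n}"
    then have "e i \<in> square_terms" using e by (auto simp: PiE_iff)
    then show "fst (e i) + fst (snd (e i)) + snd (snd (e i)) \<le> 2" by (auto simp: square_terms_def)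
  qed
  finally have "3 * d fst \<le> 2 * n \<or> 3 * d (fst \<circ> snd) \<le> 2 * n \<or> 3 * d (snd \<circ> snd) \<le> 2 * n"
    by (simp add: algebra_simps) linarith
  then show ?thesis
    using exponent_slice_in_PiE[OF e] unfolding low_degree_exponents_def d_def by blast
qed

lemma num3_cases: "(x::3) = 0 \<or> x = 1 \<or> x = 2"
proof (cases x)
  case (of_int z)
  then have "z = 0 \<or> z = 1 \<or> z = 2" by auto
  then show ?thesis using of_int by auto
qed

lemma num3_dvd_one:
  assumes "(x::3) \<noteq> 0" shows "x dvd 1"
proof
  show "1 = x * x" using assms num3_cases[of x] by auto
qed

lemma num3_one_minus_square: "(1::3) - t^2 = (if t = 0 then 1 else 0)"
  using num3_cases[of t] by (auto simp: power2_eq_square)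

lemma num3_triple: "(x::3) + x + x = 0"
  using num3_cases[of x] by auto

lemma prod_indicator:
  "(\<Prod>i<(n::nat). if P i then 1 else 0 :: 'a::comm_semiring_1) = (if \<forall>i<n. P i then 1 else 0)"
  by (induction n) (auto simp: less_Suc_eq)

lemma cap_set_delta:
  assumes "A \<subseteq> F3vec n"
    and cap: "\<forall>a\<in>A. \<forall>b\<in>A. \<forall>c\<in>A. (\<forall>i. a i + b i + c i = 0) \<longrightarrow> a = b \<and> b = c"
    and "x \<in> A" "y \<in> A" "z \<in> A"
  shows "(if x = y \<and> y = z then 1 else 0) = (\<Prod>i<n. (1::3) - (x i + y i + z i)^2)"
proof -
  have "(\<forall>i<n. x i + y i + z i = 0) \<longleftrightarrow> (\<forall>i. x i + y i + z i = 0)"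
    using assms(1,3-5) by (auto simp: F3vec_def subset_iff) (metis add_0 not_le)
  also have "\<dots> \<longleftrightarrow> x = y \<and> y = z"
    using cap assms(3-5) num3_triple by blast
  finally show ?thesis
    by (simp add: num3_one_minus_square prod_indicator)
qed

lemma finite_low_degree_exponents: "finite (low_degree_exponents n)"
  unfolding low_degree_exponents_def by (rule finite_subset[of _ "{..<n} \<rightarrow>\<^sub>E {0, 1, 2}"]) (auto intro: finite_PiE)

lemma card_cap_set_le:
  assumes "finite A" and "A \<subseteq> F3vec n"
    and cap: "\<forall>a\<in>A. \<forall>b\<in>A. \<forall>c\<in>A. (\<forall>i. a i + b i + c i = 0) \<longrightarrow> a = b \<and> b = c"
  shows "card A \<le> 3 * card (low_degree_exponents n)"
proof (rule card_le_of_delta_expansion[where E = "{..<n} \<rightarrow>\<^sub>E square_terms"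
      and c = "\<lambda>e. \<Prod>i<n. square_coeff (e i)" and f = "eval_monomial n"
      and p = "exponent_slice n fst" and q = "exponent_slice n (fst \<circ> snd)"
      and r = "exponent_slice n (snd \<circ> snd)"])
  show "finite ({..<n} \<rightarrow>\<^sub>E square_terms)"
    by (rule finite_PiE) (auto simp: square_terms_def)
  show "\<And>a::3. a \<noteq> 0 \<Longrightarrow> a dvd 1" by (rule num3_dvd_one)
  show "finite A" by fact
  show "finite (low_degree_exponents n)" by (rule finite_low_degree_exponents)
  show "\<And>e. e \<in> {..<n} \<rightarrow>\<^sub>E square_terms \<Longrightarrow> exponent_slice n fst e \<in> low_degree_exponents n
    \<or> exponent_slice n (fst \<circ> snd) e \<in> low_degree_exponents n
    \<or> exponent_slice n (snd \<circ> snd) e \<in> low_degree_exponents n"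
    by (rule exponent_slices_low_degree)
  fix x y z assume "x \<in> A" "y \<in> A" "z \<in> A"
  with assms(2) cap show "(if x = y \<and> y = z then 1 else 0) = (\<Sum>e \<in> {..<n} \<rightarrow>\<^sub>E square_terms.
      (\<Prod>i<n. square_coeff (e i)) * eval_monomial n (exponent_slice n fst e) x
      * eval_monomial n (exponent_slice n (fst \<circ> snd) e) y * eval_monomial n (exponent_slice n (snd \<circ> snd) e) z)"
    by (simp add: cap_set_delta flip: prod_one_minus_square_expansion)
qed

lemma card_low_degree_exponents_le:
  fixes x :: real
  assumes x: "0 < x" "x \<le> 1"
  shows "real (card (low_degree_exponents n)) \<le> ((1 + x + x^2) / root 3 (x^2)) ^ n"
proof -
  define w where "w = root 3 (x^2)"
  have "0 < w" using x by (simp add: w_def)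
  have w3: "w^3 = x^2" using x by (simp add: w_def real_root_pow_pos2)
  \<comment> \<open>Markov's trick: weighting each exponent vector by x to its degree, the low-degree ones
      weigh at least w^n, while all of {0,1,2}^n together weigh (1 + x + x^2)^n.\<close>
  have low: "w^n \<le> x ^ total_degree n \<alpha>" if "\<alpha> \<in> low_degree_exponents n" for \<alpha>
  proof -
    have deg: "3 * total_degree n \<alpha> \<le> 2 * n" using that by (simp add: low_degree_exponents_def)
    have "(w^n)^3 = (x^2)^n" by (simp flip: w3 power_mult add: mult.commute)
    also have "\<dots> \<le> x^(3 * total_degree n \<alpha>)"
      unfolding power_mult[symmetric] using x deg by (intro power_decreasing) auto
    also have "\<dots> = (x ^ total_degree n \<alpha>)^3" by (metis mult.commute power_mult)
    finally have "(w^n)^Suc 2 \<le> (x ^ total_degree n \<alpha>)^Suc 2" by (simp add: numeral_3_eq_3)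
    moreover have "0 \<le> x ^ total_degree n \<alpha>" using x by simp
    ultimately show ?thesis by (rule power_le_imp_le_base)
  qed
  have "real (card (low_degree_exponents n)) * w^n = (\<Sum>\<alpha>\<in>low_degree_exponents n. w^n)" by simp
  also have "\<dots> \<le> (\<Sum>\<alpha>\<in>low_degree_exponents n. x ^ total_degree n \<alpha>)"
    by (rule sum_mono) (rule low)
  also have "\<dots> \<le> (\<Sum>\<alpha>\<in>{..<n} \<rightarrow>\<^sub>E {0, 1, 2}. x ^ total_degree n \<alpha>)"
    by (rule sum_mono2[OF finite_PiE]) (use x in \<open>auto simp: low_degree_exponents_def\<close>)
  also have "\<dots> = (\<Sum>\<alpha>\<in>{..<n} \<rightarrow>\<^sub>E {0, 1, 2}. \<Prod>i<n. x ^ \<alpha> i)"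
    by (simp add: total_degree_def power_sum)
  also have "\<dots> = (\<Prod>i<n. \<Sum>k\<in>{0, 1, 2::nat}. x ^ k)"
    by (rule prod_sum_PiE[symmetric]) auto
  also have "\<dots> = (1 + x + x^2)^n" by (simp add: add.assoc)
  finally have "real (card (low_degree_exponents n)) \<le> (1 + x + x^2)^n / w^n"
    using \<open>0 < w\<close> by (simp add: field_simps)
  then show ?thesis by (simp add: w_def power_divide)
qed

text \<open>The bound of the previous lemma is optimal at the positive root x0 of 4x^2 + x - 2,
  the minimiser of (1 + x + x^2) / x^(2/3).\<close>

lemma cap_c_eq_optimum:
  defines "x0 \<equiv> (sqrt 33 - 1) / 8"
  shows "cap_c = (1 + x0 + x0^2) / root 3 (x0^2)" and "0 < x0" and "x0 \<le> 1"
proof -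
  define s where "s = sqrt 33"
  have s2: "s^2 = 33" by (simp add: s_def)
  have s5: "5 < s" "s < 6"
    using real_less_rsqrt[of 5 33] real_sqrt_less_mono[of 33 "6^2"] by (simp_all add: s_def)
  then show "0 < x0" "x0 \<le> 1" by (simp_all add: x0_def s_def)
  have square: "x0^2 = (17 - s)/32" and quadratic: "1 + x0 + x0^2 = (45 + 3*s)/32"
    by (simp_all add: x0_def s_def[symmetric] power2_diff s2 field_simps)
  have cube: "(45 + 3*s)^3 = 2 * (17 - s) * (5589 + 891 * s)"
  proof -
    have ss: "s * s = 33" using s2 by (simp add: power2_eq_square)
    have "(45 + 3*s)^3 = 91125 + 18225*s + 1215*(s*s) + 27*(s*s)*s"
      by (simp add: power3_eq_cube algebra_simps)
    also have "\<dots> = 190026 + 19116*s - 1782*(s*s)" by (simp add: ss)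
    also have "\<dots> = 2 * (17 - s) * (5589 + 891 * s)" by (simp add: algebra_simps)
    finally show ?thesis .
  qed
  define r where "r = (1 + x0 + x0^2) / root 3 (x0^2)"
  have "0 < r" using \<open>0 < x0\<close> by (simp add: r_def add_pos_pos)
  have "r^3 = ((45 + 3*s)/32)^3 / ((17 - s)/32)"
    using \<open>0 < x0\<close> by (simp add: r_def power_divide real_root_pow_pos2 flip: square quadratic)
  also have "\<dots> = (45 + 3*s)^3 / (1024 * (17 - s))"
    using s5 by (simp add: power_divide field_simps)
  also have "\<dots> = (5589 + 891 * s) / 512"
    using s5 unfolding cube by (simp add: field_simps)
  finally have "r = root 3 ((5589 + 891 * s) / 512)"
    using \<open>0 < r\<close> by (metis less_imp_le real_root_power_cancel zero_less_numeral)
  also have "\<dots> = cap_c"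
    using real_root_pos2[of 3 8] by (simp add: cap_c_def s_def real_root_divide)
  finally show "cap_c = (1 + x0 + x0^2) / root 3 (x0^2)" by (simp add: r_def)
qed

theorem mainTheorem8:
  shows "\<exists>C::real. C > 0 \<and>
    (\<forall>n::nat. \<forall>A. n \<ge> 1 \<longrightarrow> A \<subseteq> F3vec n \<longrightarrow>
       (\<forall>a\<in>A. \<forall>b\<in>A. \<forall>c\<in>A. (\<forall>i. a i + b i + c i = 0) \<longrightarrow> a = b \<and> b = c) \<longrightarrow>
       real (card A) \<le> C * cap_c ^ n)"
proof (intro exI[of _ 3] conjI allI impI)
  fix n :: nat and A :: "(nat \<Rightarrow> 3) set"
  assume "A \<subseteq> F3vec n"
    and cap: "\<forall>a\<in>A. \<forall>b\<in>A. \<forall>c\<in>A. (\<forall>i. a i + b i + c i = 0) \<longrightarrow> a = b \<and> b = c"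
  show "real (card A) \<le> 3 * cap_c ^ n"
  proof (cases "finite A")
    case True
    have "real (card A) \<le> 3 * real (card (low_degree_exponents n))"
      using card_cap_set_le[OF True \<open>A \<subseteq> F3vec n\<close> cap] by linarith
    also have "\<dots> \<le> 3 * cap_c ^ n"
      using card_low_degree_exponents_le[OF cap_c_eq_optimum(2,3)] by (simp add: cap_c_eq_optimum(1))
    finally show ?thesis .
  next
    case False
    then show ?thesis by (simp add: cap_c_def)
  qed
qed simp

end
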